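(* Let $G$ be a group with finite symmetric generating set $Z$, let $X,Y$ be finite sets equipped with maps to $G$, let $K\ge0$, and fix a total order on $Y^{\$}$ with induced lexicographic order $\le_{lex}$ on words of equal length over $Y^{\$}$. Suppose $\mathcal{S}\subseteq(Y^{\$})^*$ is a regular language. Then the language $$\mathcal{M}_2=\{(U,V)\in B^*\mid V \text{ is the }\le_{lex}\text{-minimum of }\{V'\in\mathcal{S}\mid (U,V')\in B^* \text{ is a } K\text{-synchronous BCD pair in }(G,d_Z)\}\}$$ is regular.
   Context: Elements of $X$ and $Y$ are regarded as elements of $G$. Let $\$_X\notin X$, $\$_Y\notin Y$ be padding symbols interpreted as the identity of $G$, $X^{\$}=X\cup\{\$_X\}$, $Y^{\$}=Y\cup\{\$_Y\}$, $B=X^{\$}\times Y^{\$}$. A word over $B$ is written $(U,V)$ with $U\in(X^{\$})^*$, $V\in(Y^{\$})^*$ of the same length. For a word $W$, $W_j$ is its prefix of length $j$ ($W_j=W$ if $j>\ell(W)$). $(U,V)\in B^*$ is a $K$-synchronous BCD pair in $(G,d_Z)$ if there exists $g\in G$ with $|g|_Z\le K$ such that $gU=_GVg$ and $|V_j^{-1}gU_j|_Z\le K$ for all $j\ge0$. *)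

theory Defs
  imports Complex_Main
begin

text \<open>The group G is the ambient type 'g (class group_add, written additively,
  not assumed commutative). Padding symbol = None.\<close>

definition word_length :: "'g::group_add set \<Rightarrow> 'g \<Rightarrow> nat" where
  "word_length Z g = (LEAST n. \<exists>ws. ws \<in> lists Z \<and> length ws = n \<and> sum_list ws = g)"

definition finite_symmetric_generating :: "'g::group_add set \<Rightarrow> bool" where
  "finite_symmetric_generating Z \<longleftrightarrow> finite Z \<and> (\<forall>z\<in>Z. - z \<in> Z)
     \<and> (\<forall>g. \<exists>ws. ws \<in> lists Z \<and> sum_list ws = g)"

definition padded :: "'a set \<Rightarrow> 'a option set" where
  "padded A = Some ` A \<union> {None}"

definition eval_word :: "('a \<Rightarrow> 'g::group_add) \<Rightarrow> 'a option list \<Rightarrow> 'g" where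
  "eval_word \<iota> U = sum_list (map (\<lambda>a. case a of None \<Rightarrow> 0 | Some x \<Rightarrow> \<iota> x) U)"

definition sync_BCD_pair ::
  "'g::group_add set \<Rightarrow> ('x \<Rightarrow> 'g) \<Rightarrow> ('y \<Rightarrow> 'g) \<Rightarrow> real \<Rightarrow> 'x option list \<Rightarrow> 'y option list \<Rightarrow> bool" where
  "sync_BCD_pair Z \<iota>X \<iota>Y K U V \<longleftrightarrow> length U = length V \<and>
     (\<exists>g. real (word_length Z g) \<le> K \<and> g + eval_word \<iota>X U = eval_word \<iota>Y V + g \<and>
        (\<forall>j. real (word_length Z (- eval_word \<iota>Y (take j V) + g + eval_word \<iota>X (take j U))) \<le> K))"

definition lex_le :: "('a \<times> 'a) set \<Rightarrow> 'a list \<Rightarrow> 'a list \<Rightarrow> bool" where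
  "lex_le r V V' \<longleftrightarrow> V = V' \<or> (V, V') \<in> lexord (r - Id)"

definition regular :: "'a set \<Rightarrow> 'a list set \<Rightarrow> bool" where
  "regular \<Sigma> L \<longleftrightarrow> (\<exists>(Q::nat set) q0 \<delta> F. finite Q \<and> q0 \<in> Q \<and>
     (\<forall>q\<in>Q. \<forall>a\<in>\<Sigma>. \<delta> q a \<in> Q) \<and> F \<subseteq> Q \<and>
     L = {w. w \<in> lists \<Sigma> \<and> foldl \<delta> q0 w \<in> F})"

end

theory Submission
  imports Defs
begin

text \<open>A language is regular iff it has finitely many left quotients. Regular languages are
  closed under intersection, difference, and letter-to-letter images and preimages. Both
  ingredients of \<open>\<M>\<^sub>2\<close> have finitely many quotients directly: a pair \<open>(U, V)\<close> is a
  \<open>K\<close>-synchronous BCD pair iff the conjugator \<open>V\<^sub>j\<^sup>-\<^sup>1 g U\<^sub>j\<close>, read letter by letter, returns to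
  \<open>g\<close> without leaving the finite \<open>K\<close>-ball of the Cayley graph; and whether \<open>V \<le>\<^sub>l\<^sub>e\<^sub>x V'\<close> is
  settled at the first differing letter. The words that are not minimal are the projections of
  triples \<open>(U, V, V')\<close> with a better witness \<open>V'\<close>, hence form a regular language, and
  \<open>\<M>\<^sub>2\<close> is a difference of regular languages.\<close>

definition left_quotient :: "'a list \<Rightarrow> 'a list set \<Rightarrow> 'a list set" where
  "left_quotient u L = {v. u @ v \<in> L}"

definition left_quotients :: "'a set \<Rightarrow> 'a list set \<Rightarrow> 'a list set set" where
  "left_quotients \<Sigma> L = {left_quotient u L | u. u \<in> lists \<Sigma>}"

lemma left_quotient_Nil [simp]: "left_quotient [] L = L"
  by (simp add: left_quotient_def)

lemma left_quotient_append: "left_quotient v (left_quotient u L) = left_quotient (u @ v) L"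
  by (simp add: left_quotient_def)

lemma foldl_in_closed:
  assumes "\<forall>q\<in>Q. \<forall>a\<in>\<Sigma>. \<delta> q a \<in> Q" "q \<in> Q" "u \<in> lists \<Sigma>"
  shows "foldl \<delta> q u \<in> Q"
  using assms(2,3) by (induction u arbitrary: q) (use assms(1) in auto)

lemma regular_imp_finite_left_quotients:
  assumes "regular \<Sigma> L"
  shows "L \<subseteq> lists \<Sigma>" "finite (left_quotients \<Sigma> L)"
proof -
  obtain Q q0 \<delta> F where Q: "finite (Q::nat set)" "q0 \<in> Q" "\<forall>q\<in>Q. \<forall>a\<in>\<Sigma>. \<delta> q a \<in> Q"
    and L: "L = {w. w \<in> lists \<Sigma> \<and> foldl \<delta> q0 w \<in> F}"
    using assms unfolding regular_def by blast
  show "L \<subseteq> lists \<Sigma>" using L by blast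
  have "left_quotients \<Sigma> L \<subseteq> (\<lambda>q. {v \<in> lists \<Sigma>. foldl \<delta> q v \<in> F}) ` Q"
  proof
    fix M assume "M \<in> left_quotients \<Sigma> L"
    then obtain u where u: "u \<in> lists \<Sigma>" "M = left_quotient u L"
      by (auto simp: left_quotients_def)
    then have "M = {v \<in> lists \<Sigma>. foldl \<delta> (foldl \<delta> q0 u) v \<in> F}"
      by (auto simp: left_quotient_def L)
    with foldl_in_closed[OF Q(3,2) u(1)] show "M \<in> (\<lambda>q. {v \<in> lists \<Sigma>. foldl \<delta> q v \<in> F}) ` Q"
      by blast
  qed
  then show "finite (left_quotients \<Sigma> L)"
    using Q(1) finite_subset by blast
qed

text \<open>Myhill--Nerode: the states are the left quotients, numbered by an injection into
  an initial segment of \<open>nat\<close> as the definition of \<open>regular\<close> demands.\<close>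

lemma finite_left_quotients_imp_regular:
  assumes L: "L \<subseteq> lists \<Sigma>" and R: "finite (left_quotients \<Sigma> L)"
  shows "regular \<Sigma> L"
proof -
  let ?R = "left_quotients \<Sigma> L"
  obtain f :: "'a list set \<Rightarrow> nat" and n where f: "f ` ?R = {i. i < n}" "inj_on f ?R"
    using finite_imp_inj_to_nat_seg[OF R] by blast
  define \<delta> where "\<delta> q a = f (left_quotient [a] (the_inv_into ?R f q))" for q a
  have quot_in: "left_quotient u L \<in> ?R" if "u \<in> lists \<Sigma>" for u
    using that by (auto simp: left_quotients_def)
  have run: "foldl \<delta> (f L) u = f (left_quotient u L)" if "u \<in> lists \<Sigma>" for u
    using that
  proof (induction u rule: rev_induct)
    case (snoc a u)
    then show ?case
      using quot_in[of u] by (simp add: \<delta>_def the_inv_into_f_f[OF f(2)] left_quotient_append)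
  qed simp
  have closed: "\<forall>q\<in>f ` ?R. \<forall>a\<in>\<Sigma>. \<delta> q a \<in> f ` ?R"
  proof (intro ballI)
    fix q a assume "q \<in> f ` ?R" "a \<in> \<Sigma>"
    then obtain u where u: "u \<in> lists \<Sigma>" "q = f (left_quotient u L)"
      by (auto simp: left_quotients_def)
    then show "\<delta> q a \<in> f ` ?R"
      using \<open>a \<in> \<Sigma>\<close> run[of "u @ [a]"] run[of u] quot_in[of "u @ [a]"] by simp
  qed
  have accept: "w \<in> L \<longleftrightarrow> w \<in> lists \<Sigma> \<and> foldl \<delta> (f L) w \<in> f ` {M \<in> ?R. [] \<in> M}" for w
  proof (cases "w \<in> lists \<Sigma>")
    case True
    have "f (left_quotient w L) \<in> f ` {M \<in> ?R. [] \<in> M} \<longleftrightarrow> [] \<in> left_quotient w L"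
      using inj_on_image_mem_iff[OF f(2), of _ "{M \<in> ?R. [] \<in> M}"] quot_in[OF True] by auto
    then show ?thesis
      using True run[OF True] by (simp add: left_quotient_def)
  qed (use L in auto)
  have accept_lang: "L = {w. w \<in> lists \<Sigma> \<and> foldl \<delta> (f L) w \<in> f ` {M \<in> ?R. [] \<in> M}}"
    by (rule set_eqI) (simp only: accept mem_Collect_eq)
  have "finite (f ` ?R)" using R by simp
  moreover have "f L \<in> f ` ?R" using quot_in[of "[]"] by simp
  moreover have "f ` {M \<in> ?R. [] \<in> M} \<subseteq> f ` ?R" by blast
  ultimately show ?thesis
    unfolding regular_def using closed accept_lang by blast
qed

lemma regular_iff_finite_left_quotients:
  "regular \<Sigma> L \<longleftrightarrow> L \<subseteq> lists \<Sigma> \<and> finite (left_quotients \<Sigma> L)"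
  using regular_imp_finite_left_quotients finite_left_quotients_imp_regular by metis

lemma regular_Int:
  assumes "regular \<Sigma> A" "regular \<Sigma> B"
  shows "regular \<Sigma> (A \<inter> B)"
proof -
  have "left_quotients \<Sigma> (A \<inter> B)
      \<subseteq> (\<lambda>(M, N). M \<inter> N) ` (left_quotients \<Sigma> A \<times> left_quotients \<Sigma> B)"
    by (auto simp: left_quotients_def left_quotient_def image_def)
  then show ?thesis
    using assms unfolding regular_iff_finite_left_quotients
    by (meson finite_SigmaI finite_imageI finite_subset le_infI1)
qed

lemma regular_Diff:
  assumes "regular \<Sigma> A" "regular \<Sigma> B"
  shows "regular \<Sigma> (A - B)"
proof -
  have "left_quotients \<Sigma> (A - B)
      \<subseteq> (\<lambda>(M, N). M - N) ` (left_quotients \<Sigma> A \<times> left_quotients \<Sigma> B)"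
    by (auto simp: left_quotients_def left_quotient_def image_def)
  then show ?thesis
    using assms unfolding regular_iff_finite_left_quotients
    by (meson finite_SigmaI finite_imageI finite_subset Diff_subset order_trans)
qed

lemma regular_preimage_map:
  assumes "h ` \<Gamma> \<subseteq> \<Sigma>" "regular \<Sigma> L"
  shows "regular \<Gamma> {w \<in> lists \<Gamma>. map h w \<in> L}"
proof -
  have "left_quotients \<Gamma> {w \<in> lists \<Gamma>. map h w \<in> L}
      \<subseteq> (\<lambda>M. {v \<in> lists \<Gamma>. map h v \<in> M}) ` left_quotients \<Sigma> L"
  proof
    fix N assume "N \<in> left_quotients \<Gamma> {w \<in> lists \<Gamma>. map h w \<in> L}"
    then obtain u where u: "u \<in> lists \<Gamma>" "N = left_quotient u {w \<in> lists \<Gamma>. map h w \<in> L}"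
      by (auto simp: left_quotients_def)
    then have "N = {v \<in> lists \<Gamma>. map h v \<in> left_quotient (map h u) L}"
      by (auto simp: left_quotient_def)
    moreover have "map h u \<in> lists \<Sigma>" using u(1) assms(1) by force
    ultimately show "N \<in> (\<lambda>M. {v \<in> lists \<Gamma>. map h v \<in> M}) ` left_quotients \<Sigma> L"
      by (auto simp: left_quotients_def)
  qed
  then show ?thesis
    using assms(2) unfolding regular_iff_finite_left_quotients by (auto intro: finite_subset)
qed

lemma left_quotient_image_map:
  assumes "L \<subseteq> lists \<Sigma>"
  shows "left_quotient u (map h ` L)
    = (\<Union>M \<in> {left_quotient u' L | u'. u' \<in> lists \<Sigma> \<and> map h u' = u}. map h ` M)"
proof (intro set_eqI iffI)
  fix v assume "v \<in> left_quotient u (map h ` L)"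
  then obtain w where w: "w \<in> L" "map h w = u @ v" by (auto simp: left_quotient_def)
  then obtain u' v' where "w = u' @ v'" "map h u' = u" "map h v' = v"
    by (auto simp: map_eq_append_conv)
  moreover from w assms have "u' \<in> lists \<Sigma>" by (auto simp: \<open>w = u' @ v'\<close>)
  ultimately show "v \<in> (\<Union>M \<in> {left_quotient u' L | u'. u' \<in> lists \<Sigma> \<and> map h u' = u}. map h ` M)"
    using w(1) by (auto simp: left_quotient_def)
next
  fix v assume "v \<in> (\<Union>M \<in> {left_quotient u' L | u'. u' \<in> lists \<Sigma> \<and> map h u' = u}. map h ` M)"
  then obtain u' v' where "u' @ v' \<in> L" "map h u' = u" "v = map h v'"
    by (auto simp: left_quotient_def)
  then show "v \<in> left_quotient u (map h ` L)"
    unfolding left_quotient_def by (metis image_eqI map_append mem_Collect_eq)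
qed

lemma regular_image_map:
  assumes "h ` \<Sigma> \<subseteq> \<Gamma>" "regular \<Sigma> L"
  shows "regular \<Gamma> (map h ` L)"
proof -
  have L: "L \<subseteq> lists \<Sigma>" "finite (left_quotients \<Sigma> L)"
    using assms(2) by (auto simp: regular_iff_finite_left_quotients)
  have "left_quotients \<Gamma> (map h ` L) \<subseteq> (\<lambda>\<M>. \<Union>M \<in> \<M>. map h ` M) ` Pow (left_quotients \<Sigma> L)"
  proof
    fix N assume "N \<in> left_quotients \<Gamma> (map h ` L)"
    then obtain u where "N = left_quotient u (map h ` L)"
      by (auto simp: left_quotients_def)
    then have "N = (\<Union>M \<in> {left_quotient u' L | u'. u' \<in> lists \<Sigma> \<and> map h u' = u}. map h ` M)"
      using left_quotient_image_map[OF L(1)] by simp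
    moreover have "{left_quotient u' L | u'. u' \<in> lists \<Sigma> \<and> map h u' = u} \<in> Pow (left_quotients \<Sigma> L)"
      by (auto simp: left_quotients_def)
    ultimately show "N \<in> (\<lambda>\<M>. \<Union>M \<in> \<M>. map h ` M) ` Pow (left_quotients \<Sigma> L)"
      by blast
  qed
  moreover have "map h ` L \<subseteq> lists \<Gamma>"
    using assms(1) L(1) by (force simp: image_subset_iff)
  ultimately show ?thesis
    using L(2) unfolding regular_iff_finite_left_quotients
    by (meson finite_Pow_iff finite_imageI finite_subset)
qed

lemma lex_le_Cons_Cons:
  "lex_le r (a # U) (b # V) \<longleftrightarrow> (if a = b then lex_le r U V else (a, b) \<in> r)"
  by (auto simp: lex_le_def)

lemma regular_lex_le_pairs:
  "regular (A \<times> A) {w \<in> lists (A \<times> A). lex_le r (map fst w) (map snd w)}"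
proof -
  define L where "L = {w \<in> lists (A \<times> A). lex_le r (map fst w) (map snd w)}"
  have step: "left_quotient [x] M \<in> {L, lists (A \<times> A), {}}"
    if "x \<in> A \<times> A" "M \<in> {L, lists (A \<times> A), {}}" for x M
  proof -
    obtain a b where x: "x = (a, b)" by fastforce
    have quot_L: "left_quotient [x] L = (if a = b then L else if (a, b) \<in> r then lists (A \<times> A) else {})"
      using that(1) by (auto simp: x L_def left_quotient_def lex_le_Cons_Cons)
    have quot_lists: "left_quotient [x] (lists (A \<times> A)) = lists (A \<times> A)"
      using that(1) by (auto simp: left_quotient_def)
    have quot_empty: "left_quotient [x] {} = {}"
      by (simp add: left_quotient_def)
    from that(2) consider "M = L" | "M = lists (A \<times> A)" | "M = {}"
      by blast
    then show ?thesis
      by cases (simp_all add: quot_L quot_lists quot_empty)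
  qed
  have "left_quotient u L \<in> {L, lists (A \<times> A), {}}" if "u \<in> lists (A \<times> A)" for u
    using that
  proof (induction u rule: rev_induct)
    case (snoc x u)
    then show ?case
      using step[of x "left_quotient u L"] by (simp add: left_quotient_append)
  qed simp
  then have "left_quotients (A \<times> A) L \<subseteq> {L, lists (A \<times> A), {}}"
    by (auto simp: left_quotients_def)
  then show ?thesis
    unfolding regular_iff_finite_left_quotients L_def by (auto intro: finite_subset)
qed

definition stays_in :: "'s set \<Rightarrow> ('s \<Rightarrow> 'a \<Rightarrow> 's) \<Rightarrow> 's \<Rightarrow> 'a list \<Rightarrow> bool" where
  "stays_in Q f s w \<longleftrightarrow> (\<forall>j. foldl f s (take j w) \<in> Q)"

lemma stays_in_append:
  "stays_in Q f s (u @ v) \<longleftrightarrow> stays_in Q f s u \<and> stays_in Q f (foldl f s u) v"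
proof
  assume H: "stays_in Q f s (u @ v)"
  have "foldl f s (take j u) \<in> Q" for j
    using H[unfolded stays_in_def, rule_format, of "min j (length u)"]
    by (cases "j \<le> length u") simp_all
  moreover have "foldl f (foldl f s u) (take j v) \<in> Q" for j
    using H[unfolded stays_in_def, rule_format, of "length u + j"] by simp
  ultimately show "stays_in Q f s u \<and> stays_in Q f (foldl f s u) v"
    by (simp add: stays_in_def)
next
  assume H: "stays_in Q f s u \<and> stays_in Q f (foldl f s u) v"
  show "stays_in Q f s (u @ v)"
    unfolding stays_in_def
  proof
    fix j show "foldl f s (take j (u @ v)) \<in> Q"
      using H by (cases "j \<le> length u") (simp_all add: stays_in_def)
  qed
qed

lemma stays_in_endpoints: "stays_in Q f s w \<Longrightarrow> s \<in> Q \<and> foldl f s w \<in> Q"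
  unfolding stays_in_def by (metis take_0 take_all order_refl foldl_Nil)

text \<open>After reading \<open>u\<close>, all that matters about a returning run is its start state and
  its current state, a pair in the finite set \<open>Q \<times> Q\<close>.\<close>

lemma regular_returning_runs:
  assumes "finite Q"
  shows "regular \<Sigma> {w \<in> lists \<Sigma>. \<exists>s. foldl f s w = s \<and> stays_in Q f s w}"
proof -
  define L where "L = {w \<in> lists \<Sigma>. \<exists>s. foldl f s w = s \<and> stays_in Q f s w}"
  define runs where "runs u = {(s, foldl f s u) | s. stays_in Q f s u}" for u
  define continuations where
    "continuations P = {v \<in> lists \<Sigma>. \<exists>(s, t) \<in> P. foldl f t v = s \<and> stays_in Q f t v}" for P
  have "left_quotient u L = continuations (runs u)" if "u \<in> lists \<Sigma>" for u
    using that by (auto simp: L_def runs_def continuations_def left_quotient_def stays_in_append)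
  moreover have "runs u \<subseteq> Q \<times> Q" for u
    using stays_in_endpoints by (fastforce simp: runs_def)
  ultimately have "left_quotients \<Sigma> L \<subseteq> continuations ` Pow (Q \<times> Q)"
    by (fastforce simp: left_quotients_def)
  then have "finite (left_quotients \<Sigma> L)"
    using assms by (meson finite_Pow_iff finite_SigmaI finite_imageI finite_subset)
  then show ?thesis
    unfolding regular_iff_finite_left_quotients L_def by blast
qed

lemma mem_image_map_fst_iff:
  "w \<in> map fst ` {t \<in> lists (\<Sigma> \<times> \<Gamma>). R (map fst t) (map snd t)}
    \<longleftrightarrow> w \<in> lists \<Sigma> \<and> (\<exists>V \<in> lists \<Gamma>. length V = length w \<and> R w V)"
proof
  assume "w \<in> map fst ` {t \<in> lists (\<Sigma> \<times> \<Gamma>). R (map fst t) (map snd t)}"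
  then obtain t where "t \<in> lists (\<Sigma> \<times> \<Gamma>)" "R (map fst t) (map snd t)" "w = map fst t"
    by blast
  then show "w \<in> lists \<Sigma> \<and> (\<exists>V \<in> lists \<Gamma>. length V = length w \<and> R w V)"
    by (intro conjI bexI[of _ "map snd t"]) force+
next
  assume "w \<in> lists \<Sigma> \<and> (\<exists>V \<in> lists \<Gamma>. length V = length w \<and> R w V)"
  then obtain V where "w \<in> lists \<Sigma>" "V \<in> lists \<Gamma>" "length V = length w" "R w V"
    by blast
  then show "w \<in> map fst ` {t \<in> lists (\<Sigma> \<times> \<Gamma>). R (map fst t) (map snd t)}"
    by (intro image_eqI[of _ _ "zip w V"]) (auto dest: set_zip_leftD set_zip_rightD)
qed

text \<open>Triples \<open>(U, V, V')\<close> of equal-length words are encoded as words over \<open>(A \<times> B) \<times> B\<close>.\<close>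

lemma regular_minimal_witness:
  assumes S: "regular B S"
    and P: "regular (A \<times> B) {w \<in> lists (A \<times> B). P (map fst w) (map snd w)}"
    and Le: "regular (B \<times> B) {w \<in> lists (B \<times> B). Le (map fst w) (map snd w)}"
    and P_length: "\<And>U V. P U V \<Longrightarrow> length U = length V"
  shows "regular (A \<times> B) {w \<in> lists (A \<times> B). map snd w \<in> S \<and> P (map fst w) (map snd w) \<and>
    (\<forall>V \<in> S. P (map fst w) V \<longrightarrow> Le (map snd w) V)}"
proof -
  have S_lists: "S \<subseteq> lists B"
    using S by (simp add: regular_iff_finite_left_quotients)
  define better where "better w V \<longleftrightarrow> V \<in> S \<and> P (map fst w) V \<and> \<not> Le (map snd w) V" for w V
  define T where "T = {t \<in> lists ((A \<times> B) \<times> B). better (map fst t) (map snd t)}"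
  have S3: "regular ((A \<times> B) \<times> B) {t \<in> lists ((A \<times> B) \<times> B). map snd t \<in> S}"
    by (rule regular_preimage_map[OF _ S]) auto
  have P3: "regular ((A \<times> B) \<times> B) {t \<in> lists ((A \<times> B) \<times> B).
      map (\<lambda>t. (fst (fst t), snd t)) t \<in> {w \<in> lists (A \<times> B). P (map fst w) (map snd w)}}"
    by (rule regular_preimage_map[OF _ P]) auto
  have Le3: "regular ((A \<times> B) \<times> B) {t \<in> lists ((A \<times> B) \<times> B).
      map (\<lambda>t. (snd (fst t), snd t)) t \<in> {w \<in> lists (B \<times> B). Le (map fst w) (map snd w)}}"
    by (rule regular_preimage_map[OF _ Le]) auto
  have T_eq: "T = {t \<in> lists ((A \<times> B) \<times> B). map snd t \<in> S}
      \<inter> {t \<in> lists ((A \<times> B) \<times> B). map (\<lambda>t. (fst (fst t), snd t)) t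
          \<in> {w \<in> lists (A \<times> B). P (map fst w) (map snd w)}}
      - {t \<in> lists ((A \<times> B) \<times> B). map (\<lambda>t. (snd (fst t), snd t)) t
          \<in> {w \<in> lists (B \<times> B). Le (map fst w) (map snd w)}}"
    by (auto simp: T_def better_def comp_def; force)
  have "regular ((A \<times> B) \<times> B) T"
    unfolding T_eq by (intro regular_Diff regular_Int S3 P3 Le3)
  then have D: "regular (A \<times> B) (map fst ` T)"
    by (rule regular_image_map[rotated]) auto
  have S2: "regular (A \<times> B) {w \<in> lists (A \<times> B). map snd w \<in> S}"
    by (rule regular_preimage_map[OF _ S]) auto
  have D_eq: "map fst ` T = {w \<in> lists (A \<times> B). \<exists>V \<in> S. better w V}"
  proof (rule set_eqI)
    fix w
    show "w \<in> map fst ` T \<longleftrightarrow> w \<in> {w \<in> lists (A \<times> B). \<exists>V \<in> S. better w V}"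
      unfolding T_def mem_image_map_fst_iff using S_lists P_length
      by (force simp: better_def)
  qed
  have "{w \<in> lists (A \<times> B). map snd w \<in> S \<and> P (map fst w) (map snd w) \<and>
      (\<forall>V \<in> S. P (map fst w) V \<longrightarrow> Le (map snd w) V)}
    = {w \<in> lists (A \<times> B). map snd w \<in> S} \<inter> {w \<in> lists (A \<times> B). P (map fst w) (map snd w)}
      - map fst ` T"
    unfolding D_eq by (auto simp: better_def)
  then show ?thesis
    using regular_Diff[OF regular_Int[OF S2 P] D] by simp
qed

definition bcd_step :: "('x \<Rightarrow> 'g::group_add) \<Rightarrow> ('y \<Rightarrow> 'g) \<Rightarrow> 'g \<Rightarrow> 'x option \<times> 'y option \<Rightarrow> 'g" where
  "bcd_step \<iota>X \<iota>Y h xy = - eval_word \<iota>Y [snd xy] + h + eval_word \<iota>X [fst xy]"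

lemma eval_word_append: "eval_word \<iota> (U @ V) = eval_word \<iota> U + eval_word \<iota> V"
  by (simp add: eval_word_def)

lemma foldl_bcd_step:
  "foldl (bcd_step \<iota>X \<iota>Y) g w = - eval_word \<iota>Y (map snd w) + g + eval_word \<iota>X (map fst w)"
proof (induction w rule: rev_induct)
  case Nil
  then show ?case by (simp add: eval_word_def)
next
  case (snoc xy w)
  then show ?case
    by (simp add: bcd_step_def eval_word_append minus_add add.assoc del: add_uminus_conv_diff)
qed

lemma add_eq_add_iff_conjugate: "(g::'g::group_add) + a = b + g \<longleftrightarrow> - b + g + a = g"
proof
  assume "g + a = b + g"
  then have "- b + (g + a) = - b + (b + g)" by simp
  then show "- b + g + a = g" by (simp add: add.assoc)
next
  assume "- b + g + a = g"
  then have "b + (- b + g + a) = b + g" by simp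
  then show "g + a = b + g" by (simp add: add.assoc[symmetric])
qed

lemma sync_BCD_pair_iff_returning_run:
  "sync_BCD_pair Z \<iota>X \<iota>Y K (map fst w) (map snd w) \<longleftrightarrow>
    (\<exists>g. foldl (bcd_step \<iota>X \<iota>Y) g w = g \<and>
      stays_in {g. real (word_length Z g) \<le> K} (bcd_step \<iota>X \<iota>Y) g w)"
  (is "_ \<longleftrightarrow> (\<exists>g. ?returns g \<and> ?stays g)")
proof -
  have returns: "?returns g \<longleftrightarrow> g + eval_word \<iota>X (map fst w) = eval_word \<iota>Y (map snd w) + g" for g
    by (simp add: foldl_bcd_step add_eq_add_iff_conjugate)
  have stays: "?stays g \<longleftrightarrow> (\<forall>j. real (word_length Z (- eval_word \<iota>Y (take j (map snd w)) + g
      + eval_word \<iota>X (take j (map fst w)))) \<le> K)" for g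
    by (simp add: stays_in_def foldl_bcd_step take_map)
  have bound: "?stays g \<Longrightarrow> real (word_length Z g) \<le> K" for g
    by (drule stays_in_endpoints) simp
  show ?thesis
  proof
    assume "sync_BCD_pair Z \<iota>X \<iota>Y K (map fst w) (map snd w)"
    then show "\<exists>g. ?returns g \<and> ?stays g"
      unfolding sync_BCD_pair_def returns stays by blast
  next
    assume "\<exists>g. ?returns g \<and> ?stays g"
    then obtain g where "?returns g" "?stays g" by blast
    then show "sync_BCD_pair Z \<iota>X \<iota>Y K (map fst w) (map snd w)"
      unfolding sync_BCD_pair_def using bound[of g] returns stays by auto
  qed
qed

lemma finite_word_length_le:
  assumes "finite Z" and generating: "\<forall>g. \<exists>ws. ws \<in> lists Z \<and> sum_list ws = g"
  shows "finite {g. real (word_length Z g) \<le> K}"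
proof -
  have "{g. real (word_length Z g) \<le> K} \<subseteq> sum_list ` {ws. set ws \<subseteq> Z \<and> length ws \<le> nat \<lfloor>K\<rfloor>}"
  proof
    fix g assume K: "g \<in> {g. real (word_length Z g) \<le> K}"
    have "\<exists>ws. ws \<in> lists Z \<and> length ws = word_length Z g \<and> sum_list ws = g"
      unfolding word_length_def by (rule LeastI_ex) (use generating in blast)
    then obtain ws where "ws \<in> lists Z" "length ws = word_length Z g" "sum_list ws = g"
      by blast
    with K show "g \<in> sum_list ` {ws. set ws \<subseteq> Z \<and> length ws \<le> nat \<lfloor>K\<rfloor>}"
      by (auto intro!: image_eqI[of _ _ ws]) linarith
  qed
  then show ?thesis
    using finite_lists_length_le[OF assms(1)] finite_subset by blast
qed

lemma regular_sync_BCD_pairs: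
  assumes "finite Z" and "\<forall>g. \<exists>ws. ws \<in> lists Z \<and> sum_list ws = g"
  shows "regular \<Sigma> {w \<in> lists \<Sigma>. sync_BCD_pair Z \<iota>X \<iota>Y K (map fst w) (map snd w)}"
  using regular_returning_runs[OF finite_word_length_le[OF assms], of \<Sigma> "bcd_step \<iota>X \<iota>Y"]
  by (simp add: sync_BCD_pair_iff_returning_run)

theorem lemma5p13:
  fixes Z :: "'g::group_add set"
    and X :: "'x set" and Y :: "'y set"
    and \<iota>X :: "'x \<Rightarrow> 'g" and \<iota>Y :: "'y \<Rightarrow> 'g"
    and K :: real
    and r :: "('y option \<times> 'y option) set"
    and S :: "'y option list set"
  assumes "finite_symmetric_generating Z"
    and "finite X" and "finite Y"
    and "K \<ge> 0"
    and "linear_order_on (padded Y) r"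
    and "S \<subseteq> lists (padded Y)"
    and "regular (padded Y) S"
  shows "regular (padded X \<times> padded Y)
     {w \<in> lists (padded X \<times> padded Y).
        map snd w \<in> S \<and> sync_BCD_pair Z \<iota>X \<iota>Y K (map fst w) (map snd w) \<and>
        (\<forall>V'\<in>S. sync_BCD_pair Z \<iota>X \<iota>Y K (map fst w) V' \<longrightarrow> lex_le r (map snd w) V')}"
proof (rule regular_minimal_witness[OF assms(7)])
  show "regular (padded X \<times> padded Y)
      {w \<in> lists (padded X \<times> padded Y). sync_BCD_pair Z \<iota>X \<iota>Y K (map fst w) (map snd w)}"
    using assms(1) unfolding finite_symmetric_generating_def
    by (blast intro: regular_sync_BCD_pairs)
  show "regular (padded Y \<times> padded Y)
      {w \<in> lists (padded Y \<times> padded Y). lex_le r (map fst w) (map snd w)}"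
    by (rule regular_lex_le_pairs)
  show "length U = length V" if "sync_BCD_pair Z \<iota>X \<iota>Y K U V" for U V
    using that by (simp add: sync_BCD_pair_def)
qed

end
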